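(* Let $k$ be an algebraically closed field of characteristic $0$, $V$ a finite-dimensional $k$-vector space, $h\in\mathrm{End}_k(V)$ such that $0$ is an eigenvalue of $h$ of algebraic multiplicity exactly $1$, $\iota\in V$ and $p\in V^*$. Then it is impossible that $p(h^{n+1}\iota)=\mathrm{tr}_V(h^n)$ for all $n\ge0$.
   Context: Here $h^0=\mathrm{id}_V$, so $\mathrm{tr}_V(h^0)=\dim V$. *)

theory Defs
  imports "Jordan_Normal_Form.Jordan_Normal_Form" "HOL-Computational_Algebra.Polynomial"
begin

definition mat_trace :: "'a :: comm_ring_1 mat \<Rightarrow> 'a" where
  "mat_trace A = (\<Sum>i<dim_row A. A $$ (i, i))"

end

theory Submission
  imports "Jordan_Normal_Form.Schur_Decomposition" "Jordan_Normal_Form.DL_Rank" Defs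
begin

text \<open>Factor the characteristic polynomial as \<open>x \<cdot> q(x)\<close> with \<open>q = \<Prod>(x - e\<^sub>i)\<close>, \<open>e\<^sub>i \<noteq> 0\<close>,
  and triangularise \<open>h\<close> with diagonal \<open>(0, e\<^sub>1, \<dots>, e\<^sub>m)\<close>. The functional
  \<open>X \<mapsto> p(h X \<iota>) - tr X\<close> is linear and, by hypothesis, vanishes on all powers of \<open>h\<close>, hence on
  \<open>q(h)\<close>. By Cayley--Hamilton \<open>h q(h) = 0\<close>, so \<open>tr q(h) = 0\<close>; but the trace of \<open>q(h)\<close> is the
  sum of \<open>q\<close> over the eigenvalues, namely \<open>q(0) = \<Prod>(-e\<^sub>i) \<noteq> 0\<close>.\<close>

lemma simple_root_linear_factorization:
  fixes f :: "'a :: alg_closed_field poly"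
  assumes "monic f" and "order a f = 1"
  obtains es where "f = (\<Prod>x\<leftarrow>a # es. [:-x, 1:])" and "a \<notin> set es"
proof -
  have "f \<noteq> 0" using assms(1) by auto
  from order_decomp[OF this, of a] assms(2)
  obtain q where f: "f = [:-a, 1:] * q" and not_dvd: "\<not> [:-a, 1:] dvd q" by auto
  have "q \<noteq> 0" using f \<open>f \<noteq> 0\<close> by auto
  have "monic q" using assms(1) unfolding f lead_coeff_mult by simp
  from alg_closed_imp_factorization[OF \<open>q \<noteq> 0\<close>] \<open>monic q\<close>
  obtain M where "q = (\<Prod>x\<in>#M. [:-x, 1:])" by auto
  moreover obtain es where "mset es = M" using ex_mset by blast
  ultimately have q: "q = (\<Prod>x\<leftarrow>es. [:-x, 1:])"
    by (metis mset_map prod_mset_prod_list)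
  have "poly q a \<noteq> 0" using not_dvd by (simp add: poly_eq_0_iff_dvd)
  hence "a \<notin> set es" unfolding q poly_prod_list by auto
  with f q show thesis by (intro that) simp_all
qed

lemma pow_mat_Suc_left:
  assumes "A \<in> carrier_mat n n"
  shows "A ^\<^sub>m Suc k = A * A ^\<^sub>m k"
proof (induction k)
  case (Suc k)
  have "A ^\<^sub>m Suc (Suc k) = A * A ^\<^sub>m k * A" using Suc by simp
  also have "\<dots> = A * A ^\<^sub>m Suc k" using assms by (simp add: assoc_mult_mat[of _ n n _ n _ n])
  finally show ?case .
qed (use assms in simp)

lemma mult_unit_vec_col:
  assumes "A \<in> carrier_mat m n" and "j < n"
  shows "A *\<^sub>v unit_vec n j = col (A :: 'a :: comm_ring_1 mat) j"
  using assms by (intro eq_vecI) auto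

lemma smult_mat_mult_mat_vec:
  assumes "A \<in> carrier_mat m n" and "v \<in> carrier_vec n"
  shows "(c \<cdot>\<^sub>m A) *\<^sub>v v = c \<cdot>\<^sub>v (A *\<^sub>v (v :: 'a :: comm_ring_1 vec))"
  using assms by (intro eq_vecI) (auto simp: scalar_prod_def sum_distrib_left ac_simps)

lemma scalar_prod_mult_mat_vec_minus_smult:
  fixes X Z :: "'a :: comm_ring_1 mat"
  assumes "M \<in> carrier_mat m n" "X \<in> carrier_mat n n" "Z \<in> carrier_mat n n"
    and "N \<in> carrier_mat n l" "v \<in> carrier_vec l" "u \<in> carrier_vec m"
  shows "u \<bullet> ((M * (X - c \<cdot>\<^sub>m Z) * N) *\<^sub>v v)
    = u \<bullet> ((M * X * N) *\<^sub>v v) - c * (u \<bullet> ((M * Z * N) *\<^sub>v v))"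
proof -
  have y: "(M * X * N) *\<^sub>v v \<in> carrier_vec m" and z: "(M * Z * N) *\<^sub>v v \<in> carrier_vec m"
    using assms by (meson mult_carrier_mat mult_mat_vec_carrier)+
  have "M * (X - c \<cdot>\<^sub>m Z) * N = M * X * N - c \<cdot>\<^sub>m (M * Z * N)"
    using assms
    by (simp add: mult_minus_distrib_mat[of _ m n] mult_smult_distrib[of _ m n]
        minus_mult_distrib_mat[of _ m n] mult_smult_assoc_mat[of _ m n])
  also have "(M * X * N - c \<cdot>\<^sub>m (M * Z * N)) *\<^sub>v v
      = (M * X * N) *\<^sub>v v - c \<cdot>\<^sub>v ((M * Z * N) *\<^sub>v v)"
    using assms by (simp add: minus_mult_distrib_mat_vec[of _ m l] smult_mat_mult_mat_vec[of _ m l])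
  finally show ?thesis
    using scalar_prod_minus_distrib[OF \<open>u \<in> carrier_vec m\<close> y smult_carrier_vec[THEN iffD2, OF z]]
      \<open>u \<in> carrier_vec m\<close> z by simp
qed

lemma upper_triangular_mult:
  fixes A B :: "'a :: comm_ring_1 mat"
  assumes A: "A \<in> carrier_mat n n" and B: "B \<in> carrier_mat n n"
    and "upper_triangular A" and "upper_triangular B"
  shows "upper_triangular (A * B)"
    and "i < n \<Longrightarrow> (A * B) $$ (i, i) = A $$ (i, i) * B $$ (i, i)"
proof -
  have lowA: "A $$ (i, k) = 0" if "k < i" "i < n" for i k
    using assms(3) A that by auto
  have lowB: "B $$ (k, j) = 0" if "j < k" "k < n" for k j
    using assms(4) B that by auto
  have entry: "(A * B) $$ (i, j) = (\<Sum>k\<in>{0..<n}. A $$ (i, k) * B $$ (k, j))"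
    if "i < n" "j < n" for i j
    using A B that by (simp add: scalar_prod_def)
  show "upper_triangular (A * B)"
  proof
    fix i j assume "j < i" "i < dim_row (A * B)"
    with A have "i < n" "j < n" by auto
    moreover have "\<forall>k\<in>{0..<n}. A $$ (i, k) * B $$ (k, j) = 0"
      using \<open>j < i\<close> \<open>i < n\<close> lowA lowB by (metis atLeastLessThan_iff leI mult_zero_left
        mult_zero_right order.strict_trans2)
    ultimately show "(A * B) $$ (i, j) = 0" by (simp only: entry sum.neutral)
  qed
  assume i: "i < n"
  have "(\<Sum>k\<in>{0..<n}. A $$ (i, k) * B $$ (k, i))
      = A $$ (i, i) * B $$ (i, i) + (\<Sum>k\<in>{0..<n} - {i}. A $$ (i, k) * B $$ (k, i))"
    using i by (intro sum.remove) auto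
  also have "(\<Sum>k\<in>{0..<n} - {i}. A $$ (i, k) * B $$ (k, i)) = 0"
    using i lowA lowB by (intro sum.neutral) (metis DiffE atLeastLessThan_iff insertI1
      linorder_neqE_nat mult_zero_left mult_zero_right)
  finally show "(A * B) $$ (i, i) = A $$ (i, i) * B $$ (i, i)" using i by (simp add: entry)
qed

fun prod_lin_mat :: "'a :: comm_ring_1 mat \<Rightarrow> 'a list \<Rightarrow> 'a mat" where
  "prod_lin_mat A [] = 1\<^sub>m (dim_row A)"
| "prod_lin_mat A (c # cs) = (A - c \<cdot>\<^sub>m 1\<^sub>m (dim_row A)) * prod_lin_mat A cs"

lemma prod_lin_mat_carrier: "A \<in> carrier_mat n n \<Longrightarrow> prod_lin_mat A cs \<in> carrier_mat n n"
  by (induction cs) auto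

lemma prod_lin_mat_upper_triangular:
  fixes B :: "'a :: comm_ring_1 mat"
  assumes B: "B \<in> carrier_mat n n" and "upper_triangular B"
  shows "upper_triangular (prod_lin_mat B cs)"
    and "i < n \<Longrightarrow> prod_lin_mat B cs $$ (i, i) = (\<Prod>c\<leftarrow>cs. B $$ (i, i) - c)"
proof -
  have "upper_triangular (prod_lin_mat B cs)
    \<and> (\<forall>i<n. prod_lin_mat B cs $$ (i, i) = (\<Prod>c\<leftarrow>cs. B $$ (i, i) - c))"
  proof (induction cs)
    case Nil
    then show ?case using B by auto
  next
    case (Cons c cs)
    have "B - c \<cdot>\<^sub>m 1\<^sub>m n \<in> carrier_mat n n" "upper_triangular (B - c \<cdot>\<^sub>m 1\<^sub>m n)"
      using B \<open>upper_triangular B\<close> unfolding upper_triangular_def by auto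
    with upper_triangular_mult[OF _ prod_lin_mat_carrier[OF B]] Cons B show ?case by auto
  qed
  then show "upper_triangular (prod_lin_mat B cs)"
    and "i < n \<Longrightarrow> prod_lin_mat B cs $$ (i, i) = (\<Prod>c\<leftarrow>cs. B $$ (i, i) - c)" by auto
qed

text \<open>Cayley--Hamilton for triangular matrices: the factor \<open>B - B\<^sub>k\<^sub>k I\<close> kills row \<open>k\<close> of the
  product of the later factors, which already vanishes below row \<open>k\<close>.\<close>
lemma prod_lin_mat_drop_diag_mat_rows:
  fixes B :: "'a :: comm_ring_1 mat"
  assumes B: "B \<in> carrier_mat n n" and "upper_triangular B" and "k \<le> n"
  shows "\<forall>i j. k \<le> i \<longrightarrow> i < n \<longrightarrow> j < n \<longrightarrow> prod_lin_mat B (drop k (diag_mat B)) $$ (i, j) = 0"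
  using \<open>k \<le> n\<close>
proof (induction k rule: inc_induct)
  case (step k)
  let ?C = "B - B $$ (k, k) \<cdot>\<^sub>m 1\<^sub>m n"
  let ?R = "prod_lin_mat B (drop (Suc k) (diag_mat B))"
  have "drop k (diag_mat B) = B $$ (k, k) # drop (Suc k) (diag_mat B)"
    using B \<open>k < n\<close> Cons_nth_drop_Suc[of k "diag_mat B"] by (simp add: diag_mat_def)
  hence prod: "prod_lin_mat B (drop k (diag_mat B)) = ?C * ?R" using B by simp
  show ?case
  proof (intro allI impI)
    fix i j assume "k \<le> i" "i < n" "j < n"
    have "?C $$ (i, l) * ?R $$ (l, j) = 0" if "l < n" for l
    proof (cases "k < l")
      case True
      then show ?thesis using step.IH \<open>l < n\<close> \<open>j < n\<close> by simp
    next
      case False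
      with \<open>k \<le> i\<close> consider "l < i" | "l = i" "i = k" by linarith
      then show ?thesis
        using B \<open>upper_triangular B\<close> \<open>i < n\<close> \<open>l < n\<close> by cases (simp_all add: upper_triangularD)
    qed
    then show "prod_lin_mat B (drop k (diag_mat B)) $$ (i, j) = 0"
      unfolding prod using B prod_lin_mat_carrier[OF B, of "drop (Suc k) (diag_mat B)"]
        \<open>i < n\<close> \<open>j < n\<close>
      by (simp add: scalar_prod_def)
  qed
qed simp

corollary prod_lin_mat_diag_mat:
  fixes B :: "'a :: comm_ring_1 mat"
  assumes B: "B \<in> carrier_mat n n" and "upper_triangular B"
  shows "prod_lin_mat B (diag_mat B) = 0\<^sub>m n n"
  using prod_lin_mat_drop_diag_mat_rows[OF assms, of 0] prod_lin_mat_carrier[OF B]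
  by (intro eq_matI) auto

lemma mat_trace_mult_comm:
  fixes A B :: "'a :: comm_ring_1 mat"
  assumes A: "A \<in> carrier_mat n m" and B: "B \<in> carrier_mat m n"
  shows "mat_trace (A * B) = mat_trace (B * A)"
proof -
  have "mat_trace (A * B) = (\<Sum>i<n. \<Sum>k<m. A $$ (i, k) * B $$ (k, i))"
    unfolding mat_trace_def using A B by (auto simp: scalar_prod_def lessThan_atLeast0)
  also have "\<dots> = (\<Sum>k<m. \<Sum>i<n. B $$ (k, i) * A $$ (i, k))"
    by (subst sum.swap) (simp add: mult.commute)
  also have "\<dots> = mat_trace (B * A)"
    unfolding mat_trace_def using A B by (auto simp: scalar_prod_def lessThan_atLeast0)
  finally show ?thesis .
qed

lemma mat_trace_similar:
  assumes "similar_mat_wit A B P Q"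
  shows "mat_trace A = mat_trace (B :: 'a :: comm_ring_1 mat)"
proof -
  obtain n where carrier: "A \<in> carrier_mat n n" "B \<in> carrier_mat n n"
    "P \<in> carrier_mat n n" "Q \<in> carrier_mat n n"
    and "Q * P = 1\<^sub>m n" and "A = P * B * Q"
    using assms unfolding similar_mat_wit_def Let_def by auto
  then have "mat_trace A = mat_trace (Q * (P * B))"
    by (metis mat_trace_mult_comm mult_carrier_mat)
  also have "Q * (P * B) = B"
    using carrier \<open>Q * P = 1\<^sub>m n\<close> by (simp flip: assoc_mult_mat[of _ n n _ n _ n])
  finally show ?thesis .
qed

lemma mat_trace_minus_smult:
  assumes "X \<in> carrier_mat n n" and "Z \<in> carrier_mat n n"
  shows "mat_trace (X - c \<cdot>\<^sub>m Z) = mat_trace X - c * mat_trace (Z :: 'a :: comm_ring_1 mat)"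
  using assms unfolding mat_trace_def by (simp add: sum_subtractf sum_distrib_left)

lemma mat_trace_prod_lin_mat:
  fixes B :: "'a :: comm_ring_1 mat"
  assumes B: "B \<in> carrier_mat n n" and "upper_triangular B"
  shows "mat_trace (prod_lin_mat B cs) = (\<Sum>x\<leftarrow>diag_mat B. \<Prod>c\<leftarrow>cs. x - c)"
  using B prod_lin_mat_carrier[OF B, of cs] prod_lin_mat_upper_triangular(2)[OF assms]
  by (auto simp: mat_trace_def diag_mat_def sum_list_sum_nth lessThan_atLeast0 intro: sum.cong)

lemma mat_trace_prod_lin_mat_diag_tl:
  fixes B :: "'a :: comm_ring_1 mat"
  assumes B: "B \<in> carrier_mat n n" and "upper_triangular B" and "diag_mat B = a # es"
  shows "mat_trace (prod_lin_mat B es) = (\<Prod>c\<leftarrow>es. a - c)"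
proof -
  have "(\<Prod>c\<leftarrow>cs. x - c) = 0" if "x \<in> set cs" for x :: 'a and cs
    using that by (induction cs) auto
  then have "(\<Sum>x\<leftarrow>es. \<Prod>c\<leftarrow>es. x - c) = (\<Sum>x\<leftarrow>es. 0)"
    by (intro arg_cong[where f = sum_list] map_cong) auto
  then show ?thesis
    unfolding mat_trace_prod_lin_mat[OF B \<open>upper_triangular B\<close>] \<open>diag_mat B = a # es\<close> by simp
qed

lemma linear_functional_prod_lin_mat:
  fixes F :: "'a :: comm_ring_1 mat \<Rightarrow> 'a"
  assumes A: "A \<in> carrier_mat n n"
    and linear: "\<And>X Z c. X \<in> carrier_mat n n \<Longrightarrow> Z \<in> carrier_mat n n \<Longrightarrow>
      F (X - c \<cdot>\<^sub>m Z) = F X - c * F Z"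
    and powers: "\<And>k. F (A ^\<^sub>m k) = 0"
  shows "F (A ^\<^sub>m k * prod_lin_mat A cs) = 0"
proof (induction cs arbitrary: k)
  case Nil
  show ?case using A powers by simp
next
  case (Cons c cs)
  let ?Y = "prod_lin_mat A cs"
  have Y: "?Y \<in> carrier_mat n n" using prod_lin_mat_carrier[OF A] .
  have Ak: "A ^\<^sub>m k \<in> carrier_mat n n" using A by simp
  have "A ^\<^sub>m k * prod_lin_mat A (c # cs) = (A ^\<^sub>m k * (A - c \<cdot>\<^sub>m 1\<^sub>m n)) * ?Y"
    using A Ak Y by (subst assoc_mult_mat[of _ n n _ n _ n]) auto
  also have "A ^\<^sub>m k * (A - c \<cdot>\<^sub>m 1\<^sub>m n) = A ^\<^sub>m Suc k - c \<cdot>\<^sub>m A ^\<^sub>m k"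
    using A Ak mult_smult_distrib[OF Ak one_carrier_mat]
    by (simp add: mult_minus_distrib_mat[of _ n n])
  also have "(A ^\<^sub>m Suc k - c \<cdot>\<^sub>m A ^\<^sub>m k) * ?Y = A ^\<^sub>m Suc k * ?Y - c \<cdot>\<^sub>m (A ^\<^sub>m k * ?Y)"
    using minus_mult_distrib_mat[of "A ^\<^sub>m Suc k" n n "c \<cdot>\<^sub>m A ^\<^sub>m k" ?Y n] A Ak Y
    by (simp add: mult_smult_assoc_mat[OF Ak Y] del: pow_mat.simps)
  moreover have "A ^\<^sub>m Suc k * ?Y \<in> carrier_mat n n" "A ^\<^sub>m k * ?Y \<in> carrier_mat n n"
    using A Y by auto
  ultimately show ?case
    using linear[of "A ^\<^sub>m Suc k * ?Y" "A ^\<^sub>m k * ?Y" c] Cons.IH[of k] Cons.IH[of "Suc k"] A Y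
    by (simp del: pow_mat.simps)
qed

text \<open>The functional \<open>X \<mapsto> u \<bullet> (M B X N v) - tr X\<close> is linear and vanishes on all powers of \<open>B\<close>,
  hence on \<open>prod_lin_mat B cs\<close>; if \<open>B\<close> annihilates this matrix, only the trace term survives.\<close>
lemma mat_trace_prod_lin_mat_eq_0:
  fixes B :: "'a :: comm_ring_1 mat"
  assumes B: "B \<in> carrier_mat n n" and M: "M \<in> carrier_mat m n" and N: "N \<in> carrier_mat n l"
    and u: "u \<in> carrier_vec m" and v: "v \<in> carrier_vec l"
    and powers: "\<And>k. u \<bullet> ((M * B ^\<^sub>m Suc k * N) *\<^sub>v v) = mat_trace (B ^\<^sub>m k)"
    and annihilated: "B * prod_lin_mat B cs = 0\<^sub>m n n"
  shows "mat_trace (prod_lin_mat B cs) = 0"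
proof -
  define F where "F X = u \<bullet> ((M * B * X * N) *\<^sub>v v) - mat_trace X" for X
  have "F (B ^\<^sub>m k) = 0" for k
    using powers[of k] pow_mat_Suc_left[OF B, of k] M B unfolding F_def
    by (simp add: assoc_mult_mat[of M m n B n _ n] del: pow_mat.simps)
  moreover have "F (X - c \<cdot>\<^sub>m Z) = F X - c * F Z"
    if "X \<in> carrier_mat n n" "Z \<in> carrier_mat n n" for X Z c
    using scalar_prod_mult_mat_vec_minus_smult[of "M * B" m n X Z N l v u c]
      mat_trace_minus_smult[OF that] that M B N u v
    unfolding F_def by (simp add: algebra_simps)
  ultimately have "F (prod_lin_mat B cs) = 0"
    using linear_functional_prod_lin_mat[OF B, of F 0 cs] prod_lin_mat_carrier[OF B, of cs] B
    by simp
  moreover have "M * B * prod_lin_mat B cs * N = 0\<^sub>m m l"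
    using M B N annihilated prod_lin_mat_carrier[OF B, of cs]
    by (simp add: assoc_mult_mat[of M m n B n _ n])
  moreover have "0\<^sub>m m l *\<^sub>v v = 0\<^sub>v m"
    using v by (intro eq_vecI) (auto simp: scalar_prod_def)
  ultimately show ?thesis using u unfolding F_def by simp
qed

lemma invertible_mat_with_first_column:
  fixes v :: "'a :: field vec"
  assumes v: "v \<in> carrier_vec n" "v \<noteq> 0\<^sub>v n"
  obtains W W' where "W \<in> carrier_mat n n" "W' \<in> carrier_mat n n"
    and "W' * W = 1\<^sub>m n" "W * W' = 1\<^sub>m n" and "col W 0 = v"
proof -
  interpret vec_space "TYPE('a)" n .
  define b where "b = basis_completion v"
  define W where "W = mat_of_cols n b"
  from basis_completion[OF v, folded b_def]
  have "distinct b" "\<not> lin_dep (set b)" "set b \<subseteq> carrier_vec n" "hd b = v" "length b = n"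
    by auto
  then have W: "W \<in> carrier_mat n n" and "cols W = b"
    unfolding W_def by auto
  have "0 < n" using v by (cases n) auto
  then have "col W 0 = v"
    unfolding W_def using \<open>hd b = v\<close> \<open>length b = n\<close> \<open>set b \<subseteq> carrier_vec n\<close>
    by (subst col_mat_of_cols) (auto simp: hd_conv_nth)
  moreover have "det W \<noteq> 0"
  proof
    assume "det W = 0"
    then obtain x where "x \<in> carrier_vec n" "x \<noteq> 0\<^sub>v n" "W *\<^sub>v x = 0\<^sub>v n"
      using det_0_iff_vec_prod_zero_field[OF W] by auto
    from lin_depI[OF W this] \<open>cols W = b\<close> \<open>distinct b\<close> \<open>\<not> lin_dep (set b)\<close> show False by auto
  qed
  from det_non_zero_imp_unit[OF W this] obtain W' where
    "W' \<in> carrier_mat n n" "W' * W = 1\<^sub>m n" "W * W' = 1\<^sub>m n"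
    unfolding Units_def ring_mat_def by auto
  ultimately show thesis using W that by blast
qed

lemma eigenvalue_similar_first_column:
  fixes A :: "'a :: field mat"
  assumes A: "A \<in> carrier_mat n n" and "eigenvalue A e"
  obtains A' W W' where "similar_mat_wit A A' W W'" and "col A' 0 = e \<cdot>\<^sub>v unit_vec n 0"
proof -
  have "0 < n" using eigenvalue_imp_nonzero_dim[OF assms] .
  define v where "v = find_eigenvector A e"
  from find_eigenvector[OF assms] A have v: "v \<in> carrier_vec n" "v \<noteq> 0\<^sub>v n"
    and Av: "A *\<^sub>v v = e \<cdot>\<^sub>v v"
    unfolding v_def eigenvector_def by auto
  obtain W W' where W: "W \<in> carrier_mat n n" and W': "W' \<in> carrier_mat n n"
    and "W' * W = 1\<^sub>m n" "W * W' = 1\<^sub>m n" and W0: "col W 0 = v"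
    using invertible_mat_with_first_column[OF v] by blast
  define A' where "A' = W' * A * W"
  have "A = W * A' * W'"
    using A W W' \<open>W * W' = 1\<^sub>m n\<close> unfolding A'_def
    by (simp add: assoc_mult_mat[of _ n n _ n _ n] flip: assoc_mult_mat[of W n n W' n _ n])
  moreover have "A' \<in> carrier_mat n n" using A W W' unfolding A'_def by auto
  ultimately have "similar_mat_wit A A' W W'"
    using A W W' \<open>W' * W = 1\<^sub>m n\<close> \<open>W * W' = 1\<^sub>m n\<close> by (intro similar_mat_witI)
  moreover have "col A' 0 = e \<cdot>\<^sub>v unit_vec n 0"
  proof -
    have "col A' 0 = W' *\<^sub>v (A *\<^sub>v (W *\<^sub>v unit_vec n 0))"
      using A W W' \<open>0 < n\<close> unfolding A'_def
      by (simp add: mult_unit_vec_col[symmetric, of _ n n] assoc_mult_mat_vec[of _ n n _ n])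
    also have "\<dots> = e \<cdot>\<^sub>v (W' *\<^sub>v (W *\<^sub>v unit_vec n 0))"
      using A W W' \<open>0 < n\<close> v W0 Av
      by (simp add: mult_unit_vec_col mult_mat_vec[of _ n n])
    also have "W' *\<^sub>v (W *\<^sub>v unit_vec n 0) = unit_vec n 0"
      using W W' \<open>W' * W = 1\<^sub>m n\<close> by (simp flip: assoc_mult_mat_vec[of _ n n _ n])
    finally show ?thesis .
  qed
  ultimately show thesis by (rule that)
qed

lemma first_column_four_block:
  assumes A: "A \<in> carrier_mat (Suc m) (Suc m)" and col: "col A 0 = e \<cdot>\<^sub>v unit_vec (Suc m) 0"
  obtains A2 A3 where "A2 \<in> carrier_mat 1 m" and "A3 \<in> carrier_mat m m"
    and "A = four_block_mat (mat 1 1 (\<lambda>_. e)) A2 (0\<^sub>m m 1) (A3 :: 'a :: comm_ring_1 mat)"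
proof -
  obtain A1 A2 A0 A3 where split: "split_block A 1 1 = (A1, A2, A0, A3)"
    by (cases "split_block A 1 1") auto
  have "dim_row A = 1 + m" "dim_col A = 1 + m" using A by auto
  note blocks = split_block[OF split this]
  have "A $$ (i, 0) = (if i = 0 then e else 0)" if "i < Suc m" for i
    using arg_cong[OF col, of "\<lambda>v. v $ i"] A that by auto
  with split A have "A1 = mat 1 1 (\<lambda>_. e)" and "A0 = 0\<^sub>m m 1"
    unfolding split_block_def Let_def by auto
  with blocks show thesis by (intro that) auto
qed

lemma four_block_similar_upper_triangular:
  assumes A2: "A2 \<in> carrier_mat 1 m" and A3: "A3 \<in> carrier_mat m m"
    and sim: "similar_mat_wit A3 B P Q" and "upper_triangular B"
  shows "\<exists>C P Q. similar_mat_wit (four_block_mat (mat 1 1 (\<lambda>_. e)) A2 (0\<^sub>m m 1) A3) C P Q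
    \<and> upper_triangular C \<and> diag_mat C = e # diag_mat (B :: 'a :: comm_ring_1 mat)"
proof -
  let ?E = "mat 1 1 (\<lambda>_. e)"
  from similar_mat_witD2[OF A3 sim] have B: "B \<in> carrier_mat m m"
    and P: "P \<in> carrier_mat m m" and Q: "Q \<in> carrier_mat m m" and "P * Q = 1\<^sub>m m"
    by auto
  define C where "C = four_block_mat ?E (A2 * P) (0\<^sub>m m 1) B"
  have "similar_mat_wit (four_block_mat ?E A2 (0\<^sub>m m 1) A3) C
      (four_block_mat (1\<^sub>m 1) (0\<^sub>m 1 m) (0\<^sub>m m 1) P) (four_block_mat (1\<^sub>m 1) (0\<^sub>m 1 m) (0\<^sub>m m 1) Q)"
    unfolding C_def
    by (rule similar_mat_wit_four_block[OF similar_mat_wit_refl sim])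
      (use A2 A3 P \<open>P * Q = 1\<^sub>m m\<close> in \<open>auto simp: assoc_mult_mat[OF A2 P Q]\<close>)
  moreover have "upper_triangular C"
    unfolding C_def using B \<open>upper_triangular B\<close> by (intro upper_triangular_four_block) auto
  moreover have "diag_mat C = e # diag_mat B"
    unfolding C_def using B by (subst diag_four_block_mat) (auto simp: diag_mat_def)
  ultimately show ?thesis by blast
qed

lemma triangularizable:
  fixes A :: "'a :: field mat"
  assumes "A \<in> carrier_mat n n" and "char_poly A = (\<Prod>e\<leftarrow>es. [:-e, 1:])"
  shows "\<exists>B P Q. similar_mat_wit A B P Q \<and> upper_triangular B \<and> diag_mat B = es"
  using assms
proof (induction es arbitrary: n A)
  case Nil
  then have "n = 0" using degree_monic_char_poly[of A n] by auto
  with Nil.prems show ?case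
    by (intro exI[of _ A] exI[of _ "1\<^sub>m n"]) (auto intro: similar_mat_wit_refl simp: diag_mat_def)
next
  case (Cons e es n A)
  have "eigenvalue A e"
    using Cons.prems unfolding eigenvalue_root_char_poly[OF Cons.prems(1)] by simp
  then obtain m where n: "n = Suc m"
    using eigenvalue_imp_nonzero_dim[OF Cons.prems(1)] not0_implies_Suc by blast
  obtain A' W W' where simAA': "similar_mat_wit A A' W W'" and col: "col A' 0 = e \<cdot>\<^sub>v unit_vec n 0"
    using eigenvalue_similar_first_column[OF Cons.prems(1) \<open>eigenvalue A e\<close>] by blast
  have A': "A' \<in> carrier_mat n n" using similar_mat_witD2[OF Cons.prems(1) simAA'] by auto
  let ?E = "mat 1 1 (\<lambda>_. e)"
  obtain A2 A3 where A2: "A2 \<in> carrier_mat 1 m" and A3: "A3 \<in> carrier_mat m m"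
    and A'_blocks: "A' = four_block_mat ?E A2 (0\<^sub>m m 1) A3"
    using first_column_four_block[OF A'[unfolded n] col[unfolded n]] by blast
  have "[:-e, 1:] * (\<Prod>e\<leftarrow>es. [:-e, 1:]) = char_poly A'"
    using Cons.prems char_poly_similar[of A A'] simAA' by (auto simp: similar_mat_def)
  also have "\<dots> = char_poly ?E * char_poly A3"
    unfolding A'_blocks by (rule char_poly_four_block_zeros_col[OF _ A2 A3]) simp
  also have "char_poly ?E = [:-e, 1:]"
    by (simp add: char_poly_defs det_def sign_def)
  finally have "char_poly A3 = (\<Prod>e\<leftarrow>es. [:-e, 1:])"
    by (metis mult_cancel_left pCons_eq_0_iff zero_neq_one)
  from Cons.IH[OF A3 this] obtain B P Q where "similar_mat_wit A3 B P Q"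
    and "upper_triangular B" and "diag_mat B = es" by blast
  then obtain C P' Q' where "similar_mat_wit A' C P' Q'" and "upper_triangular C"
    and "diag_mat C = e # es"
    using four_block_similar_upper_triangular[OF A2 A3, of B P Q e] A'_blocks by auto
  then show ?case using similar_mat_wit_trans[OF simAA'] by blast
qed

theorem mainTheorem13:
  fixes h :: "'a :: {alg_closed_field, field_char_0} mat"
    and \<iota> p :: "'a vec" and d :: nat
  assumes "h \<in> carrier_mat d d"
    and "\<iota> \<in> carrier_vec d"
    and "p \<in> carrier_vec d"
    and "eigenvalue h 0"
    and "order 0 (char_poly h) = 1"
  shows "\<not> (\<forall>n::nat. p \<bullet> ((h ^\<^sub>m (n + 1)) *\<^sub>v \<iota>) = mat_trace (h ^\<^sub>m n))"
proof
  assume eq: "\<forall>n. p \<bullet> ((h ^\<^sub>m (n + 1)) *\<^sub>v \<iota>) = mat_trace (h ^\<^sub>m n)"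
  have "monic (char_poly h)" using degree_monic_char_poly[OF assms(1)] by simp
  then obtain es where "char_poly h = (\<Prod>x\<leftarrow>0 # es. [:-x, 1:])" and "0 \<notin> set es"
    using simple_root_linear_factorization assms(5) by metis
  then obtain B P Q where sim: "similar_mat_wit h B P Q"
    and ut: "upper_triangular B" and diag: "diag_mat B = 0 # es"
    using triangularizable[OF assms(1)] by blast
  from similar_mat_witD2[OF assms(1) sim] have B: "B \<in> carrier_mat d d"
    and P: "P \<in> carrier_mat d d" and Q: "Q \<in> carrier_mat d d" by auto
  have "p \<bullet> ((P * B ^\<^sub>m Suc k * Q) *\<^sub>v \<iota>) = mat_trace (B ^\<^sub>m k)" for k
    using eq[rule_format, of k] similar_mat_wit_pow_id[OF sim, of "Suc k"]
      mat_trace_similar[OF similar_mat_wit_pow[OF sim, of k]] by (simp del: pow_mat.simps)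
  moreover have "B * prod_lin_mat B es = 0\<^sub>m d d"
    using prod_lin_mat_diag_mat[OF B ut] eq_matI[of "B - 0 \<cdot>\<^sub>m 1\<^sub>m d" B] B
    unfolding diag by simp
  ultimately have "mat_trace (prod_lin_mat B es) = 0"
    using mat_trace_prod_lin_mat_eq_0[OF B P Q assms(3,2)] by blast
  with \<open>0 \<notin> set es\<close> show False
    unfolding mat_trace_prod_lin_mat_diag_tl[OF B ut diag] by (auto simp: prod_list_zero_iff)
qed

end
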